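(* Let $(X,G)$ be a dislocation space with $X$ a reflexive Banach space, and let $(u_n)$ be a bounded sequence in $X$. Let $L\in\mathbb{N}_0$, and let sequences $(g^{(l)}_n)_n\subset G$ and elements $w^{(l)}\in X$ ($l=0,\dots,L$) satisfy $g^{(0)}_n=\mathrm{Id}_X$, $(g^{(l)}_n)^{-1}u_n\to w^{(l)}$ weakly in $X$ for $l=0,\dots,L$, and $(g^{(l)}_n)^{-1}g^{(m)}_n\rightharpoonup 0$ operator-weakly whenever $0\le l<m\le L$, as $n\to\infty$. Assume there is a sequence $(g^{(L+1)}_n)\subset G$ such that, along a subsequence, $$(g^{(L+1)}_n)^{-1}\Big(u_n-\sum_{l=0}^L g^{(l)}_nw^{(l)}\Big)\to w^{(L+1)}\neq0\quad\text{weakly in }X.$$ Then, along this subsequence, $(g^{(l)}_n)^{-1}g^{(L+1)}_n\rightharpoonup0$ operator-weakly as $n\to\infty$ for every $l=0,\dots,L$.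
   Context: Dislocation space: a Banach space $X$ with a group $G\subset\mathcal{B}(X)$ (under composition) of bijective linear isometries such that (1) every $(g_n)\subset G$ with $g_n\not\rightharpoonup0$ has an operator-strongly convergent subsequence (limit in $\mathcal{B}(X)$), and (2) for every $(g_n)\subset G$ with $g_n\not\rightharpoonup0$ and every $(u_n)\subset X$ with $u_n\to0$ weakly, there is a subsequence with $g_{n_j}u_{n_j}\to0$ weakly. Here $A_n\rightharpoonup A$ (operator-weakly) means $A_nu\to Au$ weakly for all $u\in X$, and operator-strong convergence means $A_nu\to Au$ in norm for all $u$. *)

theory Defs
  imports "HOL-Analysis.Analysis"
begin

definition weak_conv :: "(nat \<Rightarrow> 'a::real_normed_vector) \<Rightarrow> 'a \<Rightarrow> bool" where
  "weak_conv xs x \<longleftrightarrow> (\<forall>f :: 'a \<Rightarrow>\<^sub>L real. (\<lambda>n. f (xs n)) \<longlonglongrightarrow> f x)"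

definition op_weak_conv :: "(nat \<Rightarrow> 'a \<Rightarrow> 'a::real_normed_vector) \<Rightarrow> ('a \<Rightarrow> 'a) \<Rightarrow> bool" where
  "op_weak_conv As A \<longleftrightarrow> (\<forall>u. weak_conv (\<lambda>n. As n u) (A u))"

definition op_strong_conv :: "(nat \<Rightarrow> 'a \<Rightarrow> 'a::real_normed_vector) \<Rightarrow> ('a \<Rightarrow> 'a) \<Rightarrow> bool" where
  "op_strong_conv As A \<longleftrightarrow> (\<forall>u. (\<lambda>n. As n u) \<longlonglongrightarrow> A u)"

definition reflexive_space :: "'a::real_normed_vector itself \<Rightarrow> bool" where
  "reflexive_space TYPE('a) \<longleftrightarrow>
     (\<forall>F :: ('a \<Rightarrow>\<^sub>L real) \<Rightarrow>\<^sub>L real. \<exists>x::'a. \<forall>f :: 'a \<Rightarrow>\<^sub>L real. blinfun_apply F f = blinfun_apply f x)"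

definition op_inv :: "('a::real_normed_vector \<Rightarrow>\<^sub>L 'a) \<Rightarrow> 'a \<Rightarrow> 'a" where
  "op_inv g = inv (blinfun_apply g)"

definition isometry_group :: "('a::real_normed_vector \<Rightarrow>\<^sub>L 'a) set \<Rightarrow> bool" where
  "isometry_group G \<longleftrightarrow>
     id_blinfun \<in> G \<and>
     (\<forall>g\<in>G. \<forall>h\<in>G. g o\<^sub>L h \<in> G) \<and>
     (\<forall>g\<in>G. \<exists>h\<in>G. g o\<^sub>L h = id_blinfun \<and> h o\<^sub>L g = id_blinfun) \<and>
     (\<forall>g\<in>G. bij (blinfun_apply g) \<and> (\<forall>x. norm (g x) = norm x))"

definition dislocation_space :: "('a::banach \<Rightarrow>\<^sub>L 'a) set \<Rightarrow> bool" where
  "dislocation_space G \<longleftrightarrow>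
     isometry_group G \<and>
     (\<forall>gs. (\<forall>n. gs n \<in> G) \<and> \<not> op_weak_conv (\<lambda>n. blinfun_apply (gs n)) (\<lambda>_. 0) \<longrightarrow>
        (\<exists>r A. strict_mono r \<and> op_strong_conv (\<lambda>n. blinfun_apply (gs (r n))) (blinfun_apply A))) \<and>
     (\<forall>gs us. (\<forall>n. gs n \<in> G) \<and> \<not> op_weak_conv (\<lambda>n. blinfun_apply (gs n)) (\<lambda>_. 0)
        \<and> weak_conv us 0 \<longrightarrow>
        (\<exists>r. strict_mono r \<and> weak_conv (\<lambda>n. gs (r n) (us (r n))) 0))"

end

theory Submission
  imports Defs
begin

text \<open>Fix \<open>l \<le> L\<close> and let \<open>v n = (g l n)\<inverse> (u n - (\<Sum>m\<le>L. g m n (w m)))\<close>. Since the profiles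
  are mutually decoupled, only the summand \<open>m = l\<close> survives in the weak limit, so \<open>v n\<close> tends
  weakly to \<open>w l - w l = 0\<close>. If \<open>(g l n)\<inverse> \<circ> g (L + 1) n\<close> did not tend to zero operator-weakly,
  neither would its inverse \<open>K n = (g (L + 1) n)\<inverse> \<circ> g l n\<close> (via the first dislocation axiom),
  and the second axiom would give a subsequence on which \<open>K n (v n)\<close> tends weakly to \<open>0\<close>.
  But \<open>K n (v n)\<close> is the sequence assumed to converge weakly to \<open>w (L + 1) \<noteq> 0\<close>.

  Uniqueness of weak limits needs a functional norming a given vector (Hahn-Banach); it is
  obtained by Zorn's lemma applied to graphs of norm-dominated linear functionals on subspaces
  that take the value \<open>norm x0\<close> at \<open>x0\<close>.\<close>

definition dominated_graph :: "'a::real_normed_vector \<Rightarrow> ('a \<times> real) set \<Rightarrow> bool" where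
  "dominated_graph x0 R \<longleftrightarrow>
     (\<forall>a b c. (a, b) \<in> R \<longrightarrow> (a, c) \<in> R \<longrightarrow> b = c) \<and> (0, 0) \<in> R \<and>
     (\<forall>a b c d. (a, b) \<in> R \<longrightarrow> (c, d) \<in> R \<longrightarrow> (a + c, b + d) \<in> R) \<and>
     (\<forall>a b t. (a, b) \<in> R \<longrightarrow> (t *\<^sub>R a, t * b) \<in> R) \<and>
     (\<forall>a b. (a, b) \<in> R \<longrightarrow> b \<le> norm a) \<and> (x0, norm x0) \<in> R"

lemma dominated_graphD:
  assumes "dominated_graph x0 R"
  shows "(a, b) \<in> R \<Longrightarrow> (a, c) \<in> R \<Longrightarrow> b = c"
    and "(0, 0) \<in> R"
    and "(a, b) \<in> R \<Longrightarrow> (a', b') \<in> R \<Longrightarrow> (a + a', b + b') \<in> R"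
    and "(a, b) \<in> R \<Longrightarrow> (t *\<^sub>R a, t * b) \<in> R"
    and "(a, b) \<in> R \<Longrightarrow> b \<le> norm a"
    and "(x0, norm x0) \<in> R"
  using assms unfolding dominated_graph_def by blast+

lemma dominated_graph_line:
  fixes x0 :: "'a::real_normed_vector"
  assumes "x0 \<noteq> 0"
  shows "dominated_graph x0 (range (\<lambda>t. (t *\<^sub>R x0, t * norm x0)))"
  unfolding dominated_graph_def
proof (intro conjI allI impI)
  fix a b c assume "(a, b) \<in> range (\<lambda>t. (t *\<^sub>R x0, t * norm x0))"
    and "(a, c) \<in> range (\<lambda>t. (t *\<^sub>R x0, t * norm x0))"
  then obtain t s where "(a, b) = (t *\<^sub>R x0, t * norm x0)" "(a, c) = (s *\<^sub>R x0, s * norm x0)"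
    by (elim rangeE)
  then show "b = c"
    using assms by simp
next
  fix a b c d assume "(a, b) \<in> range (\<lambda>t. (t *\<^sub>R x0, t * norm x0))"
    and "(c, d) \<in> range (\<lambda>t. (t *\<^sub>R x0, t * norm x0))"
  then obtain t s where "(a, b) = (t *\<^sub>R x0, t * norm x0)" "(c, d) = (s *\<^sub>R x0, s * norm x0)"
    by (elim rangeE)
  then show "(a + c, b + d) \<in> range (\<lambda>t. (t *\<^sub>R x0, t * norm x0))"
    by (intro range_eqI[of _ _ "t + s"]) (simp add: algebra_simps)
next
  fix a b r assume "(a, b) \<in> range (\<lambda>t. (t *\<^sub>R x0, t * norm x0))"
  then obtain t where "(a, b) = (t *\<^sub>R x0, t * norm x0)"
    by (elim rangeE)
  then show "(r *\<^sub>R a, r * b) \<in> range (\<lambda>t. (t *\<^sub>R x0, t * norm x0))"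
    by (intro range_eqI[of _ _ "r * t"]) simp
next
  fix a b assume "(a, b) \<in> range (\<lambda>t. (t *\<^sub>R x0, t * norm x0))"
  then obtain t where "(a, b) = (t *\<^sub>R x0, t * norm x0)"
    by (elim rangeE)
  then show "b \<le> norm a"
    by (simp add: mult_right_mono)
next
  show "(0, 0) \<in> range (\<lambda>t. (t *\<^sub>R x0, t * norm x0))"
    by (intro range_eqI[of _ _ 0]) simp
  show "(x0, norm x0) \<in> range (\<lambda>t. (t *\<^sub>R x0, t * norm x0))"
    by (intro range_eqI[of _ _ 1]) simp
qed

lemma dominated_graph_Union_chain:
  assumes "C \<in> chains {R. dominated_graph x0 R}" "C \<noteq> {}"
  shows "dominated_graph x0 (\<Union>C)"
proof -
  have ok: "\<And>R. R \<in> C \<Longrightarrow> dominated_graph x0 R"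
    and two: "\<And>p q. p \<in> \<Union>C \<Longrightarrow> q \<in> \<Union>C \<Longrightarrow> \<exists>R\<in>C. p \<in> R \<and> q \<in> R"
    using assms(1) unfolding chains_def chain_subset_def by blast+
  obtain R0 where "R0 \<in> C"
    using assms(2) by blast
  show ?thesis
    unfolding dominated_graph_def
  proof (intro conjI allI impI)
    fix a b c assume "(a, b) \<in> \<Union>C" "(a, c) \<in> \<Union>C"
    then obtain R where "R \<in> C" "(a, b) \<in> R" "(a, c) \<in> R"
      using two by blast
    then show "b = c"
      using dominated_graphD(1)[OF ok] by blast
  next
    fix a b c d assume "(a, b) \<in> \<Union>C" "(c, d) \<in> \<Union>C"
    then obtain R where "R \<in> C" "(a, b) \<in> R" "(c, d) \<in> R"
      using two by blast
    then show "(a + c, b + d) \<in> \<Union>C"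
      using dominated_graphD(3)[OF ok] by blast
  next
    fix a b t assume "(a, b) \<in> \<Union>C"
    then obtain R where "R \<in> C" "(a, b) \<in> R"
      by blast
    then show "(t *\<^sub>R a, t * b) \<in> \<Union>C"
      using dominated_graphD(4)[OF ok] by blast
  next
    fix a b assume "(a, b) \<in> \<Union>C"
    then obtain R where "R \<in> C" "(a, b) \<in> R"
      by blast
    then show "b \<le> norm a"
      using dominated_graphD(5)[OF ok] by blast
  next
    show "(0, 0) \<in> \<Union>C" "(x0, norm x0) \<in> \<Union>C"
      using \<open>R0 \<in> C\<close> dominated_graphD(2,6)[OF ok] by blast+
  qed
qed

lemma dominated_graph_extension_functional:
  assumes M: "dominated_graph x0 M" and y: "y \<notin> Domain M"
    and "(a, b) \<in> M" "(a', b') \<in> M" "a + t *\<^sub>R y = a' + t' *\<^sub>R y"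
  shows "t = t' \<and> b = b'"
proof -
  have not_multiple: "p \<noteq> s *\<^sub>R y" if "(p, q) \<in> M" "s \<noteq> 0" for p q s
  proof
    assume "p = s *\<^sub>R y"
    then have "(1 / s) *\<^sub>R p = y"
      using \<open>s \<noteq> 0\<close> by simp
    moreover have "((1 / s) *\<^sub>R p, (1 / s) * q) \<in> M"
      using dominated_graphD(4)[OF M that(1)] .
    ultimately show False
      using y by blast
  qed
  have "a = a' + t' *\<^sub>R y - t *\<^sub>R y"
    using assms(5) by (metis add_diff_cancel_right')
  then have diff_eq: "a + (-1) *\<^sub>R a' = (t' - t) *\<^sub>R y"
    by (simp only:) (simp add: scaleR_diff_left)
  have "(a + (-1) *\<^sub>R a', b + (-1) * b') \<in> M"
    using dominated_graphD(3)[OF M assms(3) dominated_graphD(4)[OF M assms(4)]] .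
  have "t = t'"
  proof (rule ccontr)
    assume "t \<noteq> t'"
    then have "a + (-1) *\<^sub>R a' \<noteq> (t' - t) *\<^sub>R y"
      using not_multiple[OF \<open>(a + (-1) *\<^sub>R a', _) \<in> M\<close>] by simp
    with diff_eq show False
      by contradiction
  qed
  with assms(5) have "a = a'"
    by simp
  with assms(3) have "b = b'"
    using dominated_graphD(1)[OF M _ assms(4)] by simp
  with \<open>t = t'\<close> show ?thesis ..
qed

lemma dominated_graph_gap:
  assumes M: "dominated_graph x0 M"
  obtains c where "\<And>a b. (a, b) \<in> M \<Longrightarrow> b - norm (a - y) \<le> c"
    and "\<And>a b. (a, b) \<in> M \<Longrightarrow> c \<le> norm (a + y) - b"
proof -
  have gap: "b - norm (a - y) \<le> norm (a' + y) - b'" if "(a, b) \<in> M" "(a', b') \<in> M" for a b a' b'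
  proof -
    have "b + b' \<le> norm (a + a')"
      using dominated_graphD(5)[OF M dominated_graphD(3)[OF M that]] .
    also have "\<dots> = norm ((a - y) + (a' + y))"
      by simp
    also have "\<dots> \<le> norm (a - y) + norm (a' + y)"
      by (rule norm_triangle_ineq)
    finally show ?thesis by simp
  qed
  define S where "S = {b - norm (a - y) | a b. (a, b) \<in> M}"
  have "S \<noteq> {}"
    unfolding S_def using dominated_graphD(2)[OF M] by blast
  have "bdd_above S"
  proof (rule bdd_aboveI)
    fix s assume "s \<in> S"
    then show "s \<le> norm y"
      unfolding S_def using gap[OF _ dominated_graphD(2)[OF M]] by auto
  qed
  show thesis
  proof (rule that[of "Sup S"])
    show "b - norm (a - y) \<le> Sup S" if "(a, b) \<in> M" for a b
      using \<open>bdd_above S\<close> that by (intro cSup_upper) (auto simp: S_def)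
    show "Sup S \<le> norm (a + y) - b" if "(a, b) \<in> M" for a b
      using \<open>S \<noteq> {}\<close> gap[OF _ that] by (intro cSup_least) (auto simp: S_def)
  qed
qed

lemma dominated_graph_extension_le_norm:
  assumes M: "dominated_graph x0 M" and "(a, b) \<in> M"
    and lower: "\<And>a b. (a, b) \<in> M \<Longrightarrow> b - norm (a - y) \<le> c"
    and upper: "\<And>a b. (a, b) \<in> M \<Longrightarrow> c \<le> norm (a + y) - b"
  shows "b + t * c \<le> norm (a + t *\<^sub>R y)"
proof -
  have scaled: "((1 / s) *\<^sub>R a, (1 / s) * b) \<in> M" for s
    using dominated_graphD(4)[OF M \<open>(a, b) \<in> M\<close>] .
  consider "t = 0" | "t > 0" | "t < 0" by linarith
  then show ?thesis
  proof cases
    case 1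
    then show ?thesis using dominated_graphD(5)[OF M \<open>(a, b) \<in> M\<close>] by simp
  next
    case 2
    have "c \<le> norm ((1 / t) *\<^sub>R a + y) - (1 / t) * b"
      using upper[OF scaled] .
    also have "(1 / t) *\<^sub>R a + y = (1 / t) *\<^sub>R (a + t *\<^sub>R y)"
      using 2 by (simp add: algebra_simps)
    finally have "t * c \<le> t * ((1 / t) * norm (a + t *\<^sub>R y) - (1 / t) * b)"
      using 2 by simp
    then show ?thesis
      using 2 by (simp add: algebra_simps)
  next
    case 3
    have "(1 / - t) * b - norm ((1 / - t) *\<^sub>R a - y) \<le> c"
      using lower[OF scaled] .
    also have "(1 / - t) *\<^sub>R a - y = (1 / - t) *\<^sub>R (a + t *\<^sub>R y)"
      using 3 by (simp add: algebra_simps)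
    finally have "- t * ((1 / - t) * b - (1 / - t) * norm (a + t *\<^sub>R y)) \<le> - t * c"
      using 3 by simp
    then show ?thesis
      using 3 by (simp add: algebra_simps)
  qed
qed

lemma dominated_graph_extension:
  assumes M: "dominated_graph x0 M" and y: "y \<notin> Domain M"
    and lower: "\<And>a b. (a, b) \<in> M \<Longrightarrow> b - norm (a - y) \<le> c"
    and upper: "\<And>a b. (a, b) \<in> M \<Longrightarrow> c \<le> norm (a + y) - b"
  shows "dominated_graph x0 {(a + t *\<^sub>R y, b + t * c) | a b t. (a, b) \<in> M}"
proof -
  define M' where "M' = {(a + t *\<^sub>R y, b + t * c) | a b t. (a, b) \<in> M}"
  have M'I: "(a + t *\<^sub>R y, b + t * c) \<in> M'" if "(a, b) \<in> M" for a b t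
    unfolding M'_def using that by blast
  have M'E: "(\<And>a b t. (a, b) \<in> M \<Longrightarrow> p = a + t *\<^sub>R y \<Longrightarrow> q = b + t * c \<Longrightarrow> P) \<Longrightarrow> P"
    if "(p, q) \<in> M'" for p q P
    using that unfolding M'_def by blast
  show ?thesis
    unfolding M'_def[symmetric] dominated_graph_def
  proof (intro conjI allI impI)
    fix p q q' assume "(p, q) \<in> M'" "(p, q') \<in> M'"
    obtain a b t where "(a, b) \<in> M" "p = a + t *\<^sub>R y" "q = b + t * c"
      using M'E[OF \<open>(p, q) \<in> M'\<close>] .
    moreover obtain a' b' t' where "(a', b') \<in> M" "p = a' + t' *\<^sub>R y" "q' = b' + t' * c"
      using M'E[OF \<open>(p, q') \<in> M'\<close>] .
    moreover have "a + t *\<^sub>R y = a' + t' *\<^sub>R y"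
      using \<open>p = a + t *\<^sub>R y\<close> \<open>p = a' + t' *\<^sub>R y\<close> by simp
    then have "t = t' \<and> b = b'"
      by (rule dominated_graph_extension_functional[OF M y \<open>(a, b) \<in> M\<close> \<open>(a', b') \<in> M\<close>])
    ultimately show "q = q'"
      by simp
  next
    fix p q p' q' assume "(p, q) \<in> M'" "(p', q') \<in> M'"
    obtain a b t where ab: "(a, b) \<in> M" "p = a + t *\<^sub>R y" "q = b + t * c"
      using M'E[OF \<open>(p, q) \<in> M'\<close>] .
    obtain a' b' t' where ab': "(a', b') \<in> M" "p' = a' + t' *\<^sub>R y" "q' = b' + t' * c"
      using M'E[OF \<open>(p', q') \<in> M'\<close>] .
    have "(a + a' + (t + t') *\<^sub>R y, b + b' + (t + t') * c) \<in> M'"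
      using M'I[OF dominated_graphD(3)[OF M ab(1) ab'(1)]] .
    then show "(p + p', q + q') \<in> M'"
      using ab ab' by (simp add: algebra_simps)
  next
    fix p q s assume "(p, q) \<in> M'"
    obtain a b t where ab: "(a, b) \<in> M" "p = a + t *\<^sub>R y" "q = b + t * c"
      using M'E[OF \<open>(p, q) \<in> M'\<close>] .
    have "(s *\<^sub>R a + (s * t) *\<^sub>R y, s * b + (s * t) * c) \<in> M'"
      using M'I[OF dominated_graphD(4)[OF M ab(1)]] .
    then show "(s *\<^sub>R p, s * q) \<in> M'"
      using ab by (simp add: algebra_simps)
  next
    fix p q assume "(p, q) \<in> M'"
    obtain a b t where "(a, b) \<in> M" "p = a + t *\<^sub>R y" "q = b + t * c"
      using M'E[OF \<open>(p, q) \<in> M'\<close>] .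
    then show "q \<le> norm p"
      using dominated_graph_extension_le_norm[OF M _ lower upper] by simp
  next
    show "(0, 0) \<in> M'" "(x0, norm x0) \<in> M'"
      using M'I[OF dominated_graphD(2)[OF M], of 0] M'I[OF dominated_graphD(6)[OF M], of 0] by simp_all
  qed
qed

lemma dominated_graph_extend:
  assumes M: "dominated_graph x0 M" and y: "y \<notin> Domain M"
  shows "\<exists>M'. dominated_graph x0 M' \<and> M \<subset> M'"
proof -
  obtain c where lower: "\<And>a b. (a, b) \<in> M \<Longrightarrow> b - norm (a - y) \<le> c"
    and upper: "\<And>a b. (a, b) \<in> M \<Longrightarrow> c \<le> norm (a + y) - b"
    using dominated_graph_gap[OF M] by blast
  define M' where "M' = {(a + t *\<^sub>R y, b + t * c) | a b t. (a, b) \<in> M}"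
  have extended: "(a + t *\<^sub>R y, b + t * c) \<in> M'" if "(a, b) \<in> M" for a b t
    unfolding M'_def using that by blast
  have "dominated_graph x0 M'"
    unfolding M'_def by (rule dominated_graph_extension[OF M y lower upper])
  moreover have "M \<subseteq> M'"
    using extended[of _ _ 0] by auto
  moreover have "(y, c) \<in> M'"
    using extended[OF dominated_graphD(2)[OF M], of 1] by simp
  moreover have "(y, c) \<notin> M"
    using y by blast
  ultimately show ?thesis
    by blast
qed

lemma exists_total_dominated_graph:
  fixes x0 :: "'a::real_normed_vector"
  assumes "x0 \<noteq> 0"
  obtains M where "dominated_graph x0 M" "Domain M = UNIV"
proof -
  have "\<forall>C\<in>chains {R. dominated_graph x0 R}. \<exists>U\<in>{R. dominated_graph x0 R}. \<forall>X\<in>C. X \<subseteq> U"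
  proof
    fix C assume C: "C \<in> chains {R. dominated_graph x0 R}"
    show "\<exists>U\<in>{R. dominated_graph x0 R}. \<forall>X\<in>C. X \<subseteq> U"
    proof (cases "C = {}")
      case True
      then show ?thesis
        using dominated_graph_line[OF assms] by auto
    next
      case False
      then have "dominated_graph x0 (\<Union>C)"
        by (rule dominated_graph_Union_chain[OF C])
      then show ?thesis by blast
    qed
  qed
  from Zorn_Lemma2[OF this] obtain M where M: "dominated_graph x0 M"
    and maximal: "\<And>X. dominated_graph x0 X \<Longrightarrow> M \<subseteq> X \<Longrightarrow> X = M"
    by blast
  have "y \<in> Domain M" for y
    using dominated_graph_extend[OF M, of y] maximal by blast
  with M show thesis
    using that by blast
qed

lemma exists_blinfun_norming:
  fixes x0 :: "'a::real_normed_vector"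
  shows "\<exists>f :: 'a \<Rightarrow>\<^sub>L real. f x0 = norm x0"
proof (cases "x0 = 0")
  case True
  then show ?thesis by (auto intro: exI[of _ 0])
next
  case False
  then obtain M where M: "dominated_graph x0 M" and total: "Domain M = UNIV"
    by (rule exists_total_dominated_graph)
  note unique = dominated_graphD(1)[OF M]
  define f where "f y = (THE b. (y, b) \<in> M)" for y
  have f_graph: "(y, f y) \<in> M" for y
  proof -
    obtain b where "(y, b) \<in> M"
      using total by blast
    then show ?thesis
      unfolding f_def by (rule theI) (use unique \<open>(y, b) \<in> M\<close> in blast)
  qed
  have f_eq: "(y, b) \<in> M \<Longrightarrow> f y = b" for y b
    using unique f_graph by blast
  have f_add: "f (a + b) = f a + f b" for a b
    using f_eq[OF dominated_graphD(3)[OF M f_graph f_graph]] .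
  have f_scale: "f (t *\<^sub>R a) = t * f a" for t a
    using f_eq[OF dominated_graphD(4)[OF M f_graph]] .
  have f_le: "f a \<le> norm a" for a
    using dominated_graphD(5)[OF M f_graph] .
  have "norm (f x) \<le> norm x * 1" for x
  proof -
    have "- f x = f ((-1) *\<^sub>R x)"
      using f_scale[of "-1" x] by simp
    also have "\<dots> \<le> norm x"
      using f_le[of "(-1) *\<^sub>R x"] by simp
    finally show ?thesis
      using f_le[of x] by simp
  qed
  then have "bounded_linear f"
    using f_add f_scale by (intro bounded_linear_intro[of f 1]) simp_all
  moreover have "f x0 = norm x0"
    using f_eq[OF dominated_graphD(6)[OF M]] .
  ultimately show ?thesis
    by (intro exI[of _ "Blinfun f"]) (simp add: bounded_linear_Blinfun_apply)
qed

lemma weak_conv_subseq: "weak_conv x a \<Longrightarrow> strict_mono r \<Longrightarrow> weak_conv (\<lambda>n. x (r n)) a"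
  unfolding weak_conv_def using LIMSEQ_subseq_LIMSEQ unfolding o_def by blast

lemma weak_conv_const: "weak_conv (\<lambda>n. a) a"
  unfolding weak_conv_def by simp

lemma weak_conv_diff: "weak_conv x a \<Longrightarrow> weak_conv y b \<Longrightarrow> weak_conv (\<lambda>n. x n - y n) (a - b)"
  unfolding weak_conv_def by (auto simp: blinfun.diff_right intro: tendsto_diff)

lemma weak_conv_sum:
  "finite I \<Longrightarrow> (\<And>i. i \<in> I \<Longrightarrow> weak_conv (x i) (a i)) \<Longrightarrow>
    weak_conv (\<lambda>n. \<Sum>i\<in>I. x i n) (\<Sum>i\<in>I. a i)"
  unfolding weak_conv_def by (auto simp: blinfun.sum_right intro: tendsto_sum)

lemma weak_conv_unique:
  assumes "weak_conv x a" "weak_conv x b"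
  shows "a = b"
proof -
  obtain f :: "'a \<Rightarrow>\<^sub>L real" where "f (a - b) = norm (a - b)"
    using exists_blinfun_norming by blast
  moreover have "f a = f b"
    using assms unfolding weak_conv_def by (meson LIMSEQ_unique)
  ultimately show ?thesis
    by (simp add: blinfun.diff_right)
qed

lemma isometry_group_bij: "isometry_group G \<Longrightarrow> g \<in> G \<Longrightarrow> bij (blinfun_apply g)"
  unfolding isometry_group_def by blast

lemma op_inv_apply: "bij (blinfun_apply g) \<Longrightarrow> op_inv g (g x) = x"
  unfolding op_inv_def by (simp add: bij_is_inj)

lemma apply_op_inv: "bij (blinfun_apply g) \<Longrightarrow> g (op_inv g x) = x"
  unfolding op_inv_def by (simp add: bij_is_surj surj_f_inv_f)

lemma isometry_group_op_inv:
  assumes "isometry_group G" "g \<in> G"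
  shows "\<exists>h\<in>G. blinfun_apply h = op_inv g"
proof -
  obtain h where "h \<in> G" "g o\<^sub>L h = id_blinfun" "h o\<^sub>L g = id_blinfun"
    using assms unfolding isometry_group_def by blast
  then have "g (h x) = x" "h (g x) = x" for x
    by (metis blinfun_apply_blinfun_compose blinfun_apply_id_blinfun id_apply)+
  then have "op_inv g = blinfun_apply h"
    unfolding op_inv_def by (intro inv_equality) auto
  with \<open>h \<in> G\<close> show ?thesis by auto
qed

lemma isometry_group_op_inv_comp:
  assumes "isometry_group G" "a \<in> G" "b \<in> G"
  shows "\<exists>c\<in>G. blinfun_apply c = op_inv a \<circ> blinfun_apply b"
proof -
  obtain h where "h \<in> G" "blinfun_apply h = op_inv a"
    using isometry_group_op_inv[OF assms(1,2)] by blast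
  moreover have "h o\<^sub>L b \<in> G"
    using assms(1,3) \<open>h \<in> G\<close> unfolding isometry_group_def by blast
  ultimately show ?thesis
    by (intro bexI[of _ "h o\<^sub>L b"]) auto
qed

lemma linear_op_inv: "isometry_group G \<Longrightarrow> g \<in> G \<Longrightarrow> linear (op_inv g)"
  by (metis isometry_group_op_inv blinfun.bounded_linear_right bounded_linear.linear)

lemma dislocation_space_isometry_group: "dislocation_space G \<Longrightarrow> isometry_group G"
  unfolding dislocation_space_def by blast

lemma dislocation_space_strong_subseq:
  assumes "dislocation_space G" "\<And>n. gs n \<in> G"
    and "\<not> op_weak_conv (\<lambda>n. blinfun_apply (gs n)) (\<lambda>_. 0)"
  obtains r A where "strict_mono r" "op_strong_conv (\<lambda>n. blinfun_apply (gs (r n))) (blinfun_apply A)"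
  using assms unfolding dislocation_space_def by blast

lemma dislocation_space_weak_null_subseq:
  assumes "dislocation_space G" "\<And>n. gs n \<in> G"
    and "\<not> op_weak_conv (\<lambda>n. blinfun_apply (gs n)) (\<lambda>_. 0)" "weak_conv us 0"
  obtains r where "strict_mono r" "weak_conv (\<lambda>n. gs (r n) (us (r n))) 0"
  using assms unfolding dislocation_space_def by blast

text \<open>If \<open>hs\<close> does not tend to zero, a subsequence converges strongly to some \<open>A\<close>, and
  \<open>x = gs n (A x) + gs n (hs n x - A x)\<close> tends weakly to zero: the first term by assumption,
  the second in norm since \<open>gs n\<close> is an isometry. Hence every functional vanishes identically.\<close>

lemma dislocation_space_op_weak_conv_zero_right_inverse:
  assumes ds: "dislocation_space G"
    and "\<And>n. gs n \<in> G" and hs_G: "\<And>n. hs n \<in> G"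
    and right_inverse: "\<And>n x. gs n (hs n x) = x"
    and gs_zero: "op_weak_conv (\<lambda>n. blinfun_apply (gs n)) (\<lambda>_. 0)"
  shows "op_weak_conv (\<lambda>n. blinfun_apply (hs n)) (\<lambda>_. 0)"
proof (rule ccontr)
  assume hs_not_zero: "\<not> op_weak_conv (\<lambda>n. blinfun_apply (hs n)) (\<lambda>_. 0)"
  then obtain q A where q: "strict_mono q"
    and strong: "op_strong_conv (\<lambda>n. blinfun_apply (hs (q n))) (blinfun_apply A)"
    using dislocation_space_strong_subseq[OF ds, where gs = hs] hs_G by blast
  have iso: "norm (gs n x) = norm x" for n x
    using dislocation_space_isometry_group[OF ds] \<open>\<And>n. gs n \<in> G\<close>
    unfolding isometry_group_def by blast
  have vanish: "f x = 0" for f :: "'a \<Rightarrow>\<^sub>L real" and x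
  proof -
    define d where "d n = hs (q n) x - A x" for n
    have "weak_conv (\<lambda>n. gs (q n) (A x)) 0"
      using gs_zero unfolding op_weak_conv_def by (intro weak_conv_subseq[OF _ q]) simp
    then have first: "(\<lambda>n. f (gs (q n) (A x))) \<longlonglongrightarrow> 0"
      unfolding weak_conv_def by (metis blinfun.zero_right)
    have second: "(\<lambda>n. f (gs (q n) (d n))) \<longlonglongrightarrow> 0"
    proof (rule Lim_null_comparison)
      have "norm (f (gs (q n) (d n))) \<le> norm f * norm (d n)" for n
        using norm_blinfun[of f "gs (q n) (d n)"] by (simp only: iso)
      then show "\<forall>\<^sub>F n in sequentially. norm (f (gs (q n) (d n))) \<le> norm f * norm (d n)"
        by (intro always_eventually allI)
      have "d \<longlonglongrightarrow> 0"
        using strong LIM_zero unfolding op_strong_conv_def d_def by blast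
      then show "(\<lambda>n. norm f * norm (d n)) \<longlonglongrightarrow> 0"
        by (intro tendsto_mult_right_zero tendsto_norm_zero)
    qed
    have "x = gs (q n) (A x) + gs (q n) (d n)" for n
      unfolding d_def by (simp add: blinfun.diff_right right_inverse)
    then have "f (gs (q n) (A x)) + f (gs (q n) (d n)) = f x" for n
      by (metis blinfun.add_right)
    then have "(\<lambda>n. f x) \<longlonglongrightarrow> 0 + 0"
      using tendsto_add[OF first second] by simp
    then show "f x = 0"
      by (simp add: LIMSEQ_const_iff)
  qed
  then have "op_weak_conv (\<lambda>n. blinfun_apply (hs n)) (\<lambda>_. 0)"
    unfolding op_weak_conv_def weak_conv_def by simp
  with hs_not_zero show False ..
qed

lemma dislocation_space_op_inv_comp_swap:
  assumes ds: "dislocation_space G" and "\<And>n. a n \<in> G" "\<And>n. b n \<in> G"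
    and "op_weak_conv (\<lambda>n. op_inv (a n) \<circ> blinfun_apply (b n)) (\<lambda>_. 0)"
  shows "op_weak_conv (\<lambda>n. op_inv (b n) \<circ> blinfun_apply (a n)) (\<lambda>_. 0)"
proof -
  have ig: "isometry_group G"
    using ds by (rule dislocation_space_isometry_group)
  have "\<forall>n. \<exists>c\<in>G. blinfun_apply c = op_inv (a n) \<circ> blinfun_apply (b n)"
    "\<forall>n. \<exists>c\<in>G. blinfun_apply c = op_inv (b n) \<circ> blinfun_apply (a n)"
    using isometry_group_op_inv_comp[OF ig] assms(2,3) by blast+
  then obtain gs hs where
    gs: "\<And>n. gs n \<in> G" "\<And>n. blinfun_apply (gs n) = op_inv (a n) \<circ> blinfun_apply (b n)" and
    hs: "\<And>n. hs n \<in> G" "\<And>n. blinfun_apply (hs n) = op_inv (b n) \<circ> blinfun_apply (a n)"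
    by metis
  have "gs n (hs n x) = x" for n x
    using isometry_group_bij[OF ig] assms(2,3) by (simp add: gs hs apply_op_inv op_inv_apply)
  then have "op_weak_conv (\<lambda>n. blinfun_apply (hs n)) (\<lambda>_. 0)"
    using dislocation_space_op_weak_conv_zero_right_inverse[OF ds, where gs = gs and hs = hs]
      gs(1) hs(1) assms(4)
    by (simp add: gs(2))
  then show ?thesis
    by (simp add: hs(2))
qed

lemma dislocation_space_weak_conv_remainder:
  fixes g :: "nat \<Rightarrow> nat \<Rightarrow> ('a::banach \<Rightarrow>\<^sub>L 'a)"
  assumes ds: "dislocation_space G"
    and g_G: "\<And>m n. m \<le> L \<Longrightarrow> g m n \<in> G"
    and profiles: "\<And>m. m \<le> L \<Longrightarrow> weak_conv (\<lambda>n. op_inv (g m n) (u n)) (w m)"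
    and decoupled: "\<And>l m. l < m \<Longrightarrow> m \<le> L \<Longrightarrow>
           op_weak_conv (\<lambda>n. op_inv (g l n) \<circ> blinfun_apply (g m n)) (\<lambda>_. 0)"
    and "l \<le> L"
  shows "weak_conv (\<lambda>n. op_inv (g l n) (u n - (\<Sum>m\<le>L. g m n (w m)))) 0"
proof -
  have ig: "isometry_group G"
    using ds by (rule dislocation_space_isometry_group)
  have summand_limit: "weak_conv (\<lambda>n. op_inv (g l n) (g m n (w m))) (if m = l then w l else 0)"
    if "m \<le> L" for m
  proof -
    consider "m = l" | "l < m" | "m < l" by linarith
    then show ?thesis
    proof cases
      case 1
      then show ?thesis
        using isometry_group_bij[OF ig g_G] \<open>l \<le> L\<close> by (simp add: op_inv_apply weak_conv_const)
    next
      case 2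
      then show ?thesis
        using decoupled[OF 2 that] unfolding op_weak_conv_def by simp
    next
      case 3
      then have "op_weak_conv (\<lambda>n. op_inv (g l n) \<circ> blinfun_apply (g m n)) (\<lambda>_. 0)"
        using dislocation_space_op_inv_comp_swap[OF ds] g_G decoupled \<open>l \<le> L\<close> that by blast
      with 3 show ?thesis
        unfolding op_weak_conv_def by simp
    qed
  qed
  have "weak_conv (\<lambda>n. \<Sum>m\<le>L. op_inv (g l n) (g m n (w m))) (\<Sum>m\<le>L. if m = l then w l else 0)"
    using summand_limit by (intro weak_conv_sum) auto
  with \<open>l \<le> L\<close> have "weak_conv (\<lambda>n. \<Sum>m\<le>L. op_inv (g l n) (g m n (w m))) (w l)"
    by simp
  then have "weak_conv (\<lambda>n. op_inv (g l n) (u n) - (\<Sum>m\<le>L. op_inv (g l n) (g m n (w m)))) (w l - w l)"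
    by (rule weak_conv_diff[OF profiles[OF \<open>l \<le> L\<close>]])
  moreover have "op_inv (g l n) (u n - (\<Sum>m\<le>L. g m n (w m)))
      = op_inv (g l n) (u n) - (\<Sum>m\<le>L. op_inv (g l n) (g m n (w m)))" for n
    using linear_op_inv[OF ig g_G[OF \<open>l \<le> L\<close>]] by (simp add: linear_diff linear_sum)
  ultimately show ?thesis
    by simp
qed

lemma dislocation_space_op_weak_conv_zero_of_weak_limits:
  assumes ds: "dislocation_space G" and a_G: "\<And>n. a n \<in> G" and b_G: "\<And>n. b n \<in> G"
    and b_limit: "weak_conv (\<lambda>n. op_inv (b n) (x n)) 0"
    and a_limit: "weak_conv (\<lambda>n. op_inv (a n) (x n)) z" and "z \<noteq> 0"
  shows "op_weak_conv (\<lambda>n. op_inv (b n) \<circ> blinfun_apply (a n)) (\<lambda>_. 0)"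
proof (rule ccontr)
  assume not_zero: "\<not> ?thesis"
  have ig: "isometry_group G"
    using ds by (rule dislocation_space_isometry_group)
  have "\<forall>n. \<exists>c\<in>G. blinfun_apply c = op_inv (a n) \<circ> blinfun_apply (b n)"
    using isometry_group_op_inv_comp[OF ig] a_G b_G by blast
  then obtain K where K_G: "\<And>n. K n \<in> G"
    and K: "\<And>n. blinfun_apply (K n) = op_inv (a n) \<circ> blinfun_apply (b n)"
    by metis
  have "\<not> op_weak_conv (\<lambda>n. blinfun_apply (K n)) (\<lambda>_. 0)"
    using not_zero dislocation_space_op_inv_comp_swap[OF ds, where a = a and b = b] a_G b_G
    by (auto simp: K)
  then obtain q where q: "strict_mono q"
    and "weak_conv (\<lambda>n. K (q n) (op_inv (b (q n)) (x (q n)))) 0"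
    using dislocation_space_weak_null_subseq[OF ds, where gs = K] K_G b_limit by blast
  moreover have "K n (op_inv (b n) (x n)) = op_inv (a n) (x n)" for n
    using isometry_group_bij[OF ig b_G] by (simp add: K apply_op_inv)
  ultimately have "weak_conv (\<lambda>n. op_inv (a (q n)) (x (q n))) 0"
    by simp
  with weak_conv_subseq[OF a_limit q] \<open>z \<noteq> 0\<close> show False
    using weak_conv_unique by blast
qed

theorem mainTheorem6:
  fixes G :: "('a::banach \<Rightarrow>\<^sub>L 'a) set"
    and u :: "nat \<Rightarrow> 'a"
    and L :: nat
    and g :: "nat \<Rightarrow> nat \<Rightarrow> ('a \<Rightarrow>\<^sub>L 'a)"
    and w :: "nat \<Rightarrow> 'a"
    and r :: "nat \<Rightarrow> nat"
  assumes "dislocation_space G"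
    and "reflexive_space TYPE('a)"
    and "bounded (range u)"
    and "\<And>l n. l \<le> L + 1 \<Longrightarrow> g l n \<in> G"
    and "\<And>n. g 0 n = id_blinfun"
    and "\<And>l. l \<le> L \<Longrightarrow> weak_conv (\<lambda>n. op_inv (g l n) (u n)) (w l)"
    and "\<And>l m. l < m \<Longrightarrow> m \<le> L \<Longrightarrow>
           op_weak_conv (\<lambda>n. op_inv (g l n) \<circ> blinfun_apply (g m n)) (\<lambda>_. 0)"
    and "strict_mono r"
    and "weak_conv (\<lambda>n. op_inv (g (L + 1) (r n))
           (u (r n) - (\<Sum>l\<le>L. g l (r n) (w l)))) (w (L + 1))"
    and "w (L + 1) \<noteq> 0"
  shows "\<forall>l\<le>L. op_weak_conv
           (\<lambda>n. op_inv (g l (r n)) \<circ> blinfun_apply (g (L + 1) (r n))) (\<lambda>_. 0)"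
proof (intro allI impI)
  fix l assume "l \<le> L"
  have "weak_conv (\<lambda>n. op_inv (g l n) (u n - (\<Sum>m\<le>L. g m n (w m)))) 0"
    by (rule dislocation_space_weak_conv_remainder[OF assms(1)]) (use assms(4,6,7) \<open>l \<le> L\<close> in auto)
  then have "weak_conv (\<lambda>n. op_inv (g l (r n)) (u (r n) - (\<Sum>m\<le>L. g m (r n) (w m)))) 0"
    by (rule weak_conv_subseq[OF _ assms(8)])
  then show "op_weak_conv (\<lambda>n. op_inv (g l (r n)) \<circ> blinfun_apply (g (L + 1) (r n))) (\<lambda>_. 0)"
    using dislocation_space_op_weak_conv_zero_of_weak_limits[OF assms(1),
        where a = "\<lambda>n. g (L + 1) (r n)" and b = "\<lambda>n. g l (r n)"]
      assms(4,9,10) \<open>l \<le> L\<close>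
    by simp
qed

end
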